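(* Let $0\le V\in L^1_{loc}(\Omega)$ satisfy $V\ge C\,\delta^{-2s-\varepsilon}$ a.e. in $\Omega$ for some constants $C>0$, $\varepsilon\ge0$. Then for every $f\in L^1(\Omega,\delta^s)$, the very weak solution $u$ of $(-\Delta)^s u+Vu=f$ in $\Omega$, $u=0$ in $\mathbb R^n\setminus\Omega$, satisfies $u/\delta^{s+\varepsilon}\in L^1(\Omega)$ (whether or not $f\varphi_\delta\in L^1(\Omega)$).
   Context: Setting: $n\ge 2$, $s\in(0,1)$, $\Omega\subset\mathbb R^n$ bounded domain with $C^2$ boundary, $\delta(x)=\operatorname{dist}(x,\mathbb R^n\setminus\Omega)$, $(-\Delta)^s u(x) = c_{n,s}\,\mathrm{P.V.}\int_{\mathbb R^n}\frac{u(x)-u(y)}{|x-y|^{n+2s}}\,dy$. $L^1(\Omega,\delta^s)=\{f: f\delta^s\in L^1(\Omega)\}$. $X^s=\{\varphi\in C^s(\mathbb R^n): \varphi=0 \text{ in }\mathbb R^n\setminus\Omega,\ (-\Delta)^s\varphi\in L^\infty(\Omega)\}$. Very weak solution: $u\in L^1(\Omega)$, $u=0$ a.e. outside $\Omega$, $Vu\delta^s\in L^1(\Omega)$, and $\int_\Omega u(-\Delta)^s\varphi+\int_\Omega Vu\varphi=\int_\Omega f\varphi$ for all $\varphi\in X^s$ (it exists and is unique). $\varphi_\delta$ denotes the solution of $(-\Delta)^s\varphi_\delta=\delta^{-s}$ in $\Omega$, $\varphi_\delta=0$ outside. *)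

theory Defs
  imports "HOL-Analysis.Analysis"
begin

definition bdist :: "('a::euclidean_space) set \<Rightarrow> 'a \<Rightarrow> real" where
  "bdist \<Omega> x = infdist x (- \<Omega>)"

text \<open>Bounded domain with C^2 boundary, given by a global C^2 defining function
  rho with Omega = {rho < 0} and nonvanishing gradient on the boundary.\<close>
definition C2_domain :: "(real^'n) set \<Rightarrow> bool" where
  "C2_domain \<Omega> \<longleftrightarrow> open \<Omega> \<and> connected \<Omega> \<and> bounded \<Omega> \<and> \<Omega> \<noteq> {} \<and>
     (\<exists>(\<rho>::real^'n \<Rightarrow> real) (g::real^'n \<Rightarrow> real^'n) (H::real^'n \<Rightarrow> real^'n^'n).
        (\<forall>x. (\<rho> has_derivative (\<lambda>h. g x \<bullet> h)) (at x)) \<and>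
        (\<forall>x. (g has_derivative (\<lambda>h. H x *v h)) (at x)) \<and>
        continuous_on UNIV H \<and>
        \<Omega> = {x. \<rho> x < 0} \<and>
        (\<forall>x\<in>frontier \<Omega>. g x \<noteq> 0))"

definition frac_const :: "nat \<Rightarrow> real \<Rightarrow> real" where
  "frac_const n s = 4 powr s * s * Gamma (real n / 2 + s) / (pi powr (real n / 2) * Gamma (1 - s))"

definition pv_trunc :: "real \<Rightarrow> (real^'n \<Rightarrow> real) \<Rightarrow> real^'n \<Rightarrow> real \<Rightarrow> real" where
  "pv_trunc s u x e =
     (LINT y:{y. e < dist x y}|lborel. (u x - u y) / dist x y powr (real CARD('n) + 2 * s))"

definition pv_exists :: "real \<Rightarrow> (real^'n \<Rightarrow> real) \<Rightarrow> real^'n \<Rightarrow> bool" where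
  "pv_exists s u x \<longleftrightarrow> (\<exists>l. (pv_trunc s u x \<longlongrightarrow> l) (at_right 0))"

text \<open>Fractional Laplacian as principal value (meaningful where pv_exists holds).\<close>
definition frac_lap :: "real \<Rightarrow> (real^'n \<Rightarrow> real) \<Rightarrow> real^'n \<Rightarrow> real" where
  "frac_lap s u x = frac_const CARD('n) s * Lim (at_right 0) (pv_trunc s u x)"

definition holder :: "real \<Rightarrow> (real^'n \<Rightarrow> real) \<Rightarrow> bool" where
  "holder s \<phi> \<longleftrightarrow> bounded (range \<phi>) \<and> (\<exists>L. \<forall>x y. \<bar>\<phi> x - \<phi> y\<bar> \<le> L * dist x y powr s)"

definition Xs :: "(real^'n) set \<Rightarrow> real \<Rightarrow> (real^'n \<Rightarrow> real) set" where
  "Xs \<Omega> s = {\<phi>. holder s \<phi> \<and> (\<forall>x. x \<notin> \<Omega> \<longrightarrow> \<phi> x = 0) \<and>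
      (AE x in lborel. x \<in> \<Omega> \<longrightarrow> pv_exists s \<phi> x) \<and>
      set_borel_measurable lborel \<Omega> (frac_lap s \<phi>) \<and>
      (\<exists>M. AE x in lborel. x \<in> \<Omega> \<longrightarrow> \<bar>frac_lap s \<phi> x\<bar> \<le> M)}"

definition very_weak_sol ::
  "(real^'n) set \<Rightarrow> real \<Rightarrow> (real^'n \<Rightarrow> real) \<Rightarrow> (real^'n \<Rightarrow> real) \<Rightarrow> (real^'n \<Rightarrow> real) \<Rightarrow> bool" where
  "very_weak_sol \<Omega> s V f u \<longleftrightarrow>
     set_integrable lborel \<Omega> u \<and>
     (AE x in lborel. x \<notin> \<Omega> \<longrightarrow> u x = 0) \<and>
     set_integrable lborel \<Omega> (\<lambda>x. V x * u x * bdist \<Omega> x powr s) \<and>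
     (\<forall>\<phi>\<in>Xs \<Omega> s.
        (LINT x:\<Omega>|lborel. u x * frac_lap s \<phi> x) + (LINT x:\<Omega>|lborel. V x * u x * \<phi> x)
          = (LINT x:\<Omega>|lborel. f x * \<phi> x))"

end

theory Submission
  imports Defs
begin

text \<open>On \<open>\<Omega>\<close> the lower bound on \<open>V\<close> gives \<open>\<delta> powr (-s-\<epsilon>) = \<delta> powr (-2s-\<epsilon>) * \<delta> powr s \<le> V \<delta> powr s / C\<close>,
  so \<open>|u| / \<delta> powr (s+\<epsilon>)\<close> is dominated by \<open>|V u \<delta> powr s| / C\<close>, which is integrable by the
  very definition of a very weak solution. Neither the equation itself nor \<open>f\<close> nor the
  regularity of the boundary (beyond \<open>\<Omega>\<close> being open and bounded) plays any role.\<close>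

lemma bdist_pos:
  fixes \<Omega> :: "'a::euclidean_space set"
  assumes "open \<Omega>" "bounded \<Omega>" "x \<in> \<Omega>"
  shows "0 < bdist \<Omega> x"
proof -
  have "\<Omega> \<noteq> UNIV"
    using assms(2) by auto
  then have "- \<Omega> \<noteq> {}"
    by auto
  then show ?thesis
    unfolding bdist_def using assms(1,3)
    by (intro infdist_pos_not_in_closed) (auto simp: closed_Compl)
qed

lemma borel_measurable_bdist [measurable]: "bdist \<Omega> \<in> borel_measurable borel"
  unfolding bdist_def by (intro borel_measurable_continuous_onI continuous_intros)

lemma set_borel_measurable_divide:
  fixes u g :: "'a \<Rightarrow> real"
  assumes "set_borel_measurable M A u" "g \<in> borel_measurable M"
  shows "set_borel_measurable M A (\<lambda>x. u x / g x)"
proof -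
  have "(\<lambda>x. (indicator A x *\<^sub>R u x) / g x) \<in> borel_measurable M"
    using assms unfolding set_borel_measurable_def by measurable
  moreover have "(\<lambda>x. (indicator A x *\<^sub>R u x) / g x) = (\<lambda>x. indicator A x *\<^sub>R (u x / g x))"
    by (simp add: indicator_def fun_eq_iff)
  ultimately show ?thesis
    unfolding set_borel_measurable_def by simp
qed

lemma weighted_bound_from_potential_bound:
  fixes d C v w s \<epsilon> :: real
  assumes "0 < d" "0 < C" "C * d powr (- 2 * s - \<epsilon>) \<le> v"
  shows "\<bar>w / d powr (s + \<epsilon>)\<bar> \<le> \<bar>v * w * d powr s / C\<bar>"
proof -
  have "1 / d powr (s + \<epsilon>) = d powr ((- 2 * s - \<epsilon>) + s)"
    by (simp add: powr_minus_divide [symmetric])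
  also have "\<dots> = d powr (- 2 * s - \<epsilon>) * d powr s"
    by (rule powr_add)
  also have "\<dots> \<le> v / C * d powr s"
    using assms(2,3) by (intro mult_right_mono) (auto simp: pos_le_divide_eq mult.commute)
  finally have "\<bar>w\<bar> * (1 / d powr (s + \<epsilon>)) \<le> \<bar>w\<bar> * (v / C * d powr s)"
    by (rule mult_left_mono) simp
  moreover have "0 \<le> v"
    using assms(2,3) by (meson order_trans mult_nonneg_nonneg less_imp_le powr_ge_zero)
  ultimately show ?thesis
    using assms(1,2) by (simp add: abs_mult abs_divide mult_ac)
qed

theorem proposition5p2:
  fixes \<Omega> :: "(real^'n) set" and s C \<epsilon> :: real
    and V f u :: "real^'n \<Rightarrow> real"
  assumes "CARD('n) \<ge> 2"
    and "0 < s" "s < 1"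
    and "C2_domain \<Omega>"
    and "\<forall>x\<in>\<Omega>. 0 \<le> V x"
    and "\<forall>K. compact K \<and> K \<subseteq> \<Omega> \<longrightarrow> set_integrable lborel K V"
    and "C > 0" "\<epsilon> \<ge> 0"
    and "AE x in lborel. x \<in> \<Omega> \<longrightarrow> V x \<ge> C * bdist \<Omega> x powr (- 2 * s - \<epsilon>)"
    and "set_integrable lborel \<Omega> (\<lambda>x. f x * bdist \<Omega> x powr s)"
    and "very_weak_sol \<Omega> s V f u"
  shows "set_integrable lborel \<Omega> (\<lambda>x. u x / bdist \<Omega> x powr (s + \<epsilon>))"
proof (rule set_integrable_bound)
  have "open \<Omega>" "bounded \<Omega>"
    using assms(4) unfolding C2_domain_def by blast+
  have u_integrable: "set_integrable lborel \<Omega> u"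
    and Vu_integrable: "set_integrable lborel \<Omega> (\<lambda>x. V x * u x * bdist \<Omega> x powr s)"
    using assms(11) unfolding very_weak_sol_def by blast+
  show "set_integrable lborel \<Omega> (\<lambda>x. V x * u x * bdist \<Omega> x powr s / C)"
    using Vu_integrable by (rule set_integrable_divide)
  show "set_borel_measurable lborel \<Omega> (\<lambda>x. u x / bdist \<Omega> x powr (s + \<epsilon>))"
  proof (rule set_borel_measurable_divide)
    show "set_borel_measurable lborel \<Omega> u"
      using u_integrable unfolding set_integrable_def set_borel_measurable_def
      by (rule borel_measurable_integrable)
  qed measurable
  show "AE x in lborel. x \<in> \<Omega> \<longrightarrow>
      norm (u x / bdist \<Omega> x powr (s + \<epsilon>)) \<le> norm (V x * u x * bdist \<Omega> x powr s / C)"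
    using assms(9)
  proof eventually_elim
    case (elim x)
    then show ?case
      using \<open>C > 0\<close> bdist_pos[OF \<open>open \<Omega>\<close> \<open>bounded \<Omega>\<close>]
      by (simp del: abs_divide add: weighted_bound_from_potential_bound)
  qed
qed

end
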